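(* Let $t(n)=\frac{\log n}{\log\log n}$. No deterministic max-of-$t(n)$ online bipartite matching algorithm can achieve an asymptotic approximation ratio greater than $1/2$.
   Context: Online one-sided bipartite matching: offline vertices are known in advance; $n$ online vertices arrive one at a time in adversarial order, each with its set of offline neighbours, and the algorithm must irrevocably match it to an unmatched neighbour or leave it unmatched; the goal is a maximum-size matching. A max-of-$k$ algorithm runs $k$ deterministic online algorithms in parallel, producing $k$ matchings, and outputs the largest. The asymptotic approximation ratio of $\mathbb{A}$ is $\liminf_{n}\inf_{I\in\mathcal{I}_n} v(\mathbb{A},I)/v(I)$, with $v(I)$ the maximum matching size. *)

theory Defs
  imports Complex_Main "HOL-Library.Extended_Real" "HOL-Library.Liminf_Limsup"
begin

text \<open>Offline vertices are natural numbers; an instance consists of the (finite) set R of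
offline vertices and the list Ns of neighbour sets of the online vertices, in arrival order.\<close>

text \<open>A deterministic online algorithm: given the offline vertex set and the neighbour sets
of all online vertices that have arrived so far (the last one being the current vertex), it
proposes an offline vertex to match the current vertex to, or None.  Its own earlier decisions
are determined by this information, since the algorithm is deterministic.\<close>
type_synonym online_alg = "nat set \<Rightarrow> nat set list \<Rightarrow> nat option"

fun run_from :: "online_alg \<Rightarrow> nat set \<Rightarrow> nat set list \<Rightarrow> nat set \<Rightarrow> nat set list \<Rightarrow> nat" where
  "run_from A R past used [] = 0"
| "run_from A R past used (N # rest) =
     (let h = past @ [N] in
      case A R h of
        Some r \<Rightarrow> (if r \<in> N \<and> r \<notin> used
                   then Suc (run_from A R h (insert r used) rest)
                   else run_from A R h used rest)
      | None \<Rightarrow> run_from A R h used rest)"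

definition alg_value :: "online_alg \<Rightarrow> nat set \<Rightarrow> nat set list \<Rightarrow> nat" where
  "alg_value A R Ns = run_from A R [] {} Ns"

definition max_of_value :: "(nat \<Rightarrow> online_alg) \<Rightarrow> nat \<Rightarrow> nat set \<Rightarrow> nat set list \<Rightarrow> nat" where
  "max_of_value As k R Ns = Max (insert 0 {alg_value (As i) R Ns | i. i < k})"

definition is_matching :: "nat set list \<Rightarrow> (nat \<times> nat) set \<Rightarrow> bool" where
  "is_matching Ns M \<longleftrightarrow>
     M \<subseteq> {(i, r). i < length Ns \<and> r \<in> Ns ! i} \<and>
     (\<forall>(i, r) \<in> M. \<forall>(j, s) \<in> M. (i = j \<longleftrightarrow> r = s))"

definition opt_value :: "nat set list \<Rightarrow> nat" where
  "opt_value Ns = Max {card M | M. is_matching Ns M}"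

text \<open>Instances with n online vertices (with nonzero optimum, so that the ratio is defined).\<close>
definition instances :: "nat \<Rightarrow> (nat set \<times> nat set list) set" where
  "instances n = {(R, Ns). finite R \<and> length Ns = n \<and> (\<forall>N \<in> set Ns. N \<subseteq> R)
                           \<and> opt_value Ns > 0}"

definition ratio_n :: "(nat \<Rightarrow> online_alg) \<Rightarrow> nat \<Rightarrow> nat \<Rightarrow> ereal" where
  "ratio_n As k n = (INF I \<in> instances n.
      ereal (real (max_of_value As k (fst I) (snd I)) / real (opt_value (snd I))))"

definition t_fun :: "nat \<Rightarrow> real" where
  "t_fun n = ln (real n) / ln (ln (real n))"

end

theory Submission
  imports Defs "HOL-Real_Asymp.Real_Asymp"
begin

text \<open>Take n offline vertices and classify the ones the adversary has not used yet by the set of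
algorithms (among the k) that have matched them.  While some class has more than k elements, the
next online vertex is adjacent exactly to that class.  Each algorithm matches at most one new
vertex, so some x in the class keeps its status, and the adversary matches the online vertex to x.
An algorithm that matched on this step had not matched the class, hence never matches x: its
matches are charged injectively to adversary vertices it does not use, so it matches at most n/2.
Once all classes have at most k elements, at most k 2^k vertices are left, so the adversary's
matching has size at least n - k 2^k.  For k = t(n) we have k 2^k \<le> 4^t(n) = o(n).\<close>

fun used_from :: "online_alg \<Rightarrow> nat set \<Rightarrow> nat set list \<Rightarrow> nat set \<Rightarrow> nat set list \<Rightarrow> nat set" where
  "used_from A R past U [] = U"
| "used_from A R past U (N # rest) =
     (let h = past @ [N] in
      used_from A R h (case A R h of
          Some r \<Rightarrow> if r \<in> N \<and> r \<notin> U then insert r U else U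
        | None \<Rightarrow> U) rest)"

definition matched :: "online_alg \<Rightarrow> nat set \<Rightarrow> nat set list \<Rightarrow> nat set" where
  "matched A R Ns = used_from A R [] {} Ns"

lemma finite_used_from: "finite U \<Longrightarrow> finite (used_from A R past U rest)"
  by (induction rest arbitrary: past U) (auto simp: Let_def split: option.split)

lemma card_used_from_eq_run_from:
  "finite U \<Longrightarrow> card (used_from A R past U rest) = card U + run_from A R past U rest"
  by (induction rest arbitrary: past U) (auto simp: Let_def split: option.split)

lemma alg_value_eq_card_matched: "alg_value A R Ns = card (matched A R Ns)"
  using card_used_from_eq_run_from[of "{}" A R "[]" Ns]
  by (simp add: alg_value_def matched_def)

lemma used_from_append:
  "used_from A R past U (xs @ ys) = used_from A R (past @ xs) (used_from A R past U xs) ys"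
  by (induction xs arbitrary: past U) (simp_all add: Let_def)

lemma matched_Nil [simp]: "matched A R [] = {}"
  by (simp add: matched_def)

lemma matched_snoc:
  "matched A R (h @ [N]) =
     (case A R (h @ [N]) of
        Some r \<Rightarrow> if r \<in> N \<and> r \<notin> matched A R h then insert r (matched A R h) else matched A R h
      | None \<Rightarrow> matched A R h)"
  unfolding matched_def by (simp add: used_from_append)

lemma finite_matched: "finite (matched A R h)"
  by (simp add: matched_def finite_used_from)

lemma matched_snoc_cases:
  obtains "matched A R (h @ [N]) = matched A R h"
  | r where "r \<in> N" "r \<notin> matched A R h" "matched A R (h @ [N]) = insert r (matched A R h)"
proof (cases "A R (h @ [N])")
  case (Some r)
  then show ?thesis
    using that by (cases "r \<in> N \<and> r \<notin> matched A R h") (auto simp: matched_snoc)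
qed (use that in \<open>simp add: matched_snoc\<close>)

lemma matched_subset_snoc: "matched A R h \<subseteq> matched A R (h @ [N])"
  by (cases rule: matched_snoc_cases[of A R h N]) auto

lemma card_matched_snoc_diff_le_1: "card (matched A R (h @ [N]) - matched A R h) \<le> 1"
  by (cases rule: matched_snoc_cases[of A R h N]) (auto simp: insert_Diff_if)

lemma matched_snoc_empty [simp]: "matched A R (h @ [{}]) = matched A R h"
  by (cases rule: matched_snoc_cases[of A R h "{}"]) auto

lemma matched_subset_Union: "matched A R h \<subseteq> \<Union>(set h)"
proof (induction h rule: rev_induct)
  case (snoc N h)
  then show ?case
    by (cases rule: matched_snoc_cases[of A R h N]) auto
qed simp

lemma is_matching_append: "is_matching Ns X \<Longrightarrow> is_matching (Ns @ Ms) X"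
  by (auto simp: is_matching_def nth_append)

lemma is_matching_snoc_insert:
  assumes "is_matching Ns X" "x \<in> N" "x \<notin> snd ` X"
  shows "is_matching (Ns @ [N]) (insert (length Ns, x) X)"
proof -
  have "(length Ns, r) \<notin> X" "(i, x) \<notin> X" for i r
    using assms(1,3) by (auto simp: is_matching_def image_iff)
  then show ?thesis
    using assms(1,2) unfolding is_matching_def by (auto simp: nth_append)
qed

lemma snd_matching_subset_Union: "is_matching Ns X \<Longrightarrow> snd ` X \<subseteq> \<Union>(set Ns)"
proof
  fix r assume "is_matching Ns X" "r \<in> snd ` X"
  then obtain i where "i < length Ns" "r \<in> Ns ! i"
    by (auto simp: is_matching_def)
  then show "r \<in> \<Union>(set Ns)"
    using nth_mem by blast
qed

lemma card_snd_matching: "is_matching Ns X \<Longrightarrow> card (snd ` X) = card X"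
  unfolding is_matching_def
  by (intro card_image inj_onI) (metis (mono_tags, lifting) case_prodD prod.collapse)

lemma finite_edges:
  "\<forall>N\<in>set Ns. finite N \<Longrightarrow> finite {(i, r). i < length Ns \<and> r \<in> Ns ! i}"
  by (rule finite_subset[of _ "SIGMA i:{..<length Ns}. Ns ! i"]) auto

lemma finite_matching: "is_matching Ns X \<Longrightarrow> \<forall>N\<in>set Ns. finite N \<Longrightarrow> finite X"
  using finite_edges by (auto simp: is_matching_def intro: finite_subset)

lemma card_matching_le_opt_value:
  assumes "is_matching Ns X" "\<forall>N\<in>set Ns. finite N"
  shows "card X \<le> opt_value Ns"
proof -
  have "{card M | M. is_matching Ns M} \<subseteq> {..card {(i, r). i < length Ns \<and> r \<in> Ns ! i}}"
    using finite_edges[OF assms(2)] by (auto simp: is_matching_def intro!: card_mono)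
  then have "finite {card M | M. is_matching Ns M}"
    using finite_subset by blast
  then show ?thesis
    unfolding opt_value_def using assms(1) by (auto intro: Max_ge)
qed

lemma max_of_value_le:
  assumes "\<And>i. i < k \<Longrightarrow> alg_value (As i) R Ns \<le> m"
  shows "max_of_value As k R Ns \<le> m"
  unfolding max_of_value_def using assms by (subst Max_le_iff) auto

text \<open>The adversary's state: the neighbour sets offered so far and its own matching X; the offline
vertices still available to it are R - snd ` X.\<close>

type_synonym adversary_state = "nat set list \<times> (nat \<times> nat) set"

context
  fixes As :: "nat \<Rightarrow> online_alg" and R :: "nat set" and k :: nat
begin

definition matchers :: "nat set list \<Rightarrow> nat \<Rightarrow> nat set" where
  "matchers h y = {a. a < k \<and> y \<in> matched (As a) R h}"

definition usage_class :: "nat set list \<Rightarrow> nat set \<Rightarrow> nat set \<Rightarrow> nat set" where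
  "usage_class h S V = {y \<in> S. matchers h y = V}"

lemma exists_matchers_snoc_unchanged:
  assumes "finite Y" "k < card Y"
  shows "\<exists>x\<in>Y. matchers (h @ [N]) x = matchers h x"
proof -
  define D where "D = (\<Union>a<k. matched (As a) R (h @ [N]) - matched (As a) R h)"
  have "card D \<le> (\<Sum>a<k. card (matched (As a) R (h @ [N]) - matched (As a) R h))"
    unfolding D_def by (rule card_UN_le) simp
  also have "\<dots> \<le> (\<Sum>a<k. 1)"
    by (intro sum_mono card_matched_snoc_diff_le_1)
  finally have "card D < card Y" using assms(2) by simp
  then have "\<not> Y \<subseteq> D"
    using card_mono[of D Y] by (auto simp: D_def finite_matched)
  then obtain x where x: "x \<in> Y" "x \<notin> D" by blast
  have "matchers (h @ [N]) x = matchers h x"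
    using x(2) by (auto simp: D_def matchers_def intro: subsetD[OF matched_subset_snoc])
  then show ?thesis using x(1) by blast
qed

lemma card_le_if_usage_classes_small:
  assumes "finite S" "\<And>V. card (usage_class h S V) \<le> k"
  shows "card S \<le> k * 2 ^ k"
proof -
  have "S = (\<Union>V\<in>Pow {..<k}. usage_class h S V)"
    by (auto simp: usage_class_def matchers_def)
  then have "card S \<le> (\<Sum>V\<in>Pow {..<k}. card (usage_class h S V))"
    by (metis card_UN_le finite_Pow_iff finite_lessThan)
  also have "\<dots> \<le> (\<Sum>V\<in>Pow {..<k}. k)"
    by (intro sum_mono assms(2))
  also have "\<dots> = k * 2 ^ k"
    by (simp add: card_Pow)
  finally show ?thesis .
qed

definition adversary_step :: "adversary_state \<Rightarrow> adversary_state" where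
  "adversary_step = (\<lambda>(h, X).
     let S = R - snd ` X in
     if \<exists>V. k < card (usage_class h S V) then
       let N = usage_class h S (SOME V. k < card (usage_class h S V));
           x = (SOME x. x \<in> N \<and> matchers (h @ [N]) x = matchers h x)
       in (h @ [N], insert (length h, x) X)
     else (h @ [{}], X))"

definition adversary :: "nat \<Rightarrow> adversary_state" where
  "adversary i = (adversary_step ^^ i) ([], {})"

lemma adversary_step_cases:
  assumes "finite R"
  obtains (offer) N x where
      "adversary_step (h, X) = (h @ [N], insert (length h, x) X)"
      "N \<subseteq> R - snd ` X" "x \<in> N"
      "\<And>a. a < k \<Longrightarrow> matched (As a) R (h @ [N]) \<noteq> matched (As a) R h \<Longrightarrow>
         x \<notin> matched (As a) R (h @ [N])"
  | (stall) "adversary_step (h, X) = (h @ [{}], X)" "card (R - snd ` X) \<le> k * 2 ^ k"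
proof (cases "\<exists>V. k < card (usage_class h (R - snd ` X) V)")
  case True
  define S where "S = R - snd ` X"
  define V where "V = (SOME V. k < card (usage_class h S V))"
  define N where "N = usage_class h S V"
  define x where "x = (SOME x. x \<in> N \<and> matchers (h @ [N]) x = matchers h x)"
  have "k < card N"
    unfolding N_def V_def S_def using True by (rule someI_ex)
  moreover have "finite N"
    using assms by (simp add: N_def S_def usage_class_def)
  ultimately have "\<exists>x. x \<in> N \<and> matchers (h @ [N]) x = matchers h x"
    using exists_matchers_snoc_unchanged by blast
  then have x: "x \<in> N \<and> matchers (h @ [N]) x = matchers h x"
    unfolding x_def by (rule someI_ex)
  have step: "adversary_step (h, X) = (h @ [N], insert (length h, x) X)"
    using True by (simp add: adversary_step_def S_def V_def N_def x_def Let_def)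
  have "N \<subseteq> R - snd ` X"
    by (auto simp: N_def S_def usage_class_def)
  moreover have "x \<notin> matched (As a) R (h @ [N])"
    if "a < k" "matched (As a) R (h @ [N]) \<noteq> matched (As a) R h" for a
  proof (cases rule: matched_snoc_cases[of "As a" R h N])
    case (2 r)
    then have "a \<notin> matchers h r" by (simp add: matchers_def)
    also have "matchers h r = matchers (h @ [N]) x"
      using \<open>r \<in> N\<close> x by (simp add: N_def usage_class_def)
    finally show ?thesis
      using that(1) by (simp add: matchers_def)
  qed (use that in simp)
  ultimately show ?thesis
    using x by (intro offer[OF step]) auto
next
  case False
  then have "adversary_step (h, X) = (h @ [{}], X)"
    by (simp add: adversary_step_def)
  moreover have "card (R - snd ` X) \<le> k * 2 ^ k"
    using False assms by (intro card_le_if_usage_classes_small) (auto simp: not_less)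
  ultimately show ?thesis by (rule stall)
qed

text \<open>The last conjunct is the charging argument, in counting form.\<close>

definition adversary_invariant :: "nat \<Rightarrow> adversary_state \<Rightarrow> bool" where
  "adversary_invariant i = (\<lambda>(h, X).
     length h = i \<and> (\<forall>N\<in>set h. N \<subseteq> R) \<and> is_matching h X \<and>
     card (R - snd ` X) \<le> max (card R - i) (k * 2 ^ k) \<and>
     (\<forall>a<k. card (matched (As a) R h) \<le> card (snd ` X - matched (As a) R h)))"

lemma adversary_invariant_step:
  assumes "finite R" and inv: "adversary_invariant i (h, X)"
  shows "adversary_invariant (Suc i) (adversary_step (h, X))"
proof -
  from inv have len: "length h = i" and sub: "\<forall>N\<in>set h. N \<subseteq> R" and mat: "is_matching h X"
    and avail: "card (R - snd ` X) \<le> max (card R - i) (k * 2 ^ k)"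
    and charge: "\<And>a. a < k \<Longrightarrow> card (matched (As a) R h) \<le> card (snd ` X - matched (As a) R h)"
    by (auto simp: adversary_invariant_def)
  have "\<forall>N\<in>set h. finite N"
    using sub \<open>finite R\<close> by (meson finite_subset)
  then have finX: "finite (snd ` X)"
    using finite_matching[OF mat] by simp
  show ?thesis
  proof (cases rule: adversary_step_cases[OF \<open>finite R\<close>, where h = h and X = X, case_names offer stall])
    case (offer N x)
    let ?X' = "insert (length h, x) X"
    have x: "x \<in> R - snd ` X" using offer(2,3) by blast
    then have mat': "is_matching (h @ [N]) ?X'"
      using is_matching_snoc_insert[OF mat offer(3)] by blast
    have "R - snd ` ?X' = (R - snd ` X) - {x}" by auto
    then have avail': "card (R - snd ` ?X') \<le> max (card R - Suc i) (k * 2 ^ k)"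
      using avail x \<open>finite R\<close> by (auto simp: card_Diff_singleton max_def split: if_splits)
    have charge': "card (matched (As a) R (h @ [N])) \<le> card (snd ` ?X' - matched (As a) R (h @ [N]))"
      if "a < k" for a
    proof (cases rule: matched_snoc_cases[of "As a" R h N])
      case 1
      have "card (matched (As a) R h) \<le> card (snd ` X - matched (As a) R h)"
        using charge that .
      also have "\<dots> \<le> card (snd ` ?X' - matched (As a) R h)"
        using finX by (intro card_mono) auto
      finally show ?thesis using 1 by simp
    next
      case (2 r)
      have "r \<notin> snd ` X" using offer(2) 2(1) by blast
      moreover have "x \<notin> matched (As a) R (h @ [N])"
        using offer(4)[OF that] 2(2,3) by auto
      ultimately have "snd ` ?X' - matched (As a) R (h @ [N]) = insert x (snd ` X - matched (As a) R h)"
        using 2(3) by auto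
      then show ?thesis
        using 2(2,3) charge[OF that] finX x by (simp add: finite_matched)
    qed
    show ?thesis
      unfolding offer(1) adversary_invariant_def prod.case
      using len sub offer(2) mat' avail' charge' by auto
  next
    case stall
    then show ?thesis
      unfolding stall(1) adversary_invariant_def prod.case
      using len sub is_matching_append[OF mat] avail charge by auto
  qed
qed

lemma adversary_invariant: "finite R \<Longrightarrow> adversary_invariant i (adversary i)"
proof (induction i)
  case 0
  then show ?case
    by (simp add: adversary_def adversary_invariant_def is_matching_def)
next
  case (Suc i)
  obtain h X where "adversary i = (h, X)" by fastforce
  then show ?case
    using Suc adversary_invariant_step by (simp add: adversary_def)
qed

end

lemma ratio_n_le:
  assumes "k * 2 ^ k < n"
  shows "ratio_n As k n \<le> ereal ((real n / 2) / (real n - real (k * 2 ^ k)))"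
proof -
  define R where "R = {..<n}"
  obtain h X where "adversary As R k n = (h, X)" by fastforce
  then have len: "length h = n" and sub: "\<forall>N\<in>set h. N \<subseteq> R" and mat: "is_matching h X"
    and avail: "card (R - snd ` X) \<le> k * 2 ^ k"
    and charge: "\<And>a. a < k \<Longrightarrow> card (matched (As a) R h) \<le> card (snd ` X - matched (As a) R h)"
    using adversary_invariant[of R As k n] by (auto simp: adversary_invariant_def R_def)
  have fin: "\<forall>N\<in>set h. finite N"
    using sub by (auto simp: R_def intro: finite_subset)
  have XR: "snd ` X \<subseteq> R"
    using snd_matching_subset_Union[OF mat] sub by blast
  have "card (R - snd ` X) = n - card X"
    using XR card_snd_matching[OF mat] by (simp add: card_Diff_subset_Int R_def Int_absorb1
        finite_subset[OF XR])
  then have cardX: "real n - real (k * 2 ^ k) \<le> real (card X)"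
    using avail by linarith
  have opt: "card X \<le> opt_value h"
    by (rule card_matching_le_opt_value[OF mat fin])
  have gap: "0 < real n - real (k * 2 ^ k)"
    using assms by (simp only: diff_gt_0_iff_gt of_nat_less_iff)
  then have "0 < real (card X)"
    using cardX by (rule less_le_trans)
  then have "0 < opt_value h"
    using opt by simp
  then have inst: "(R, h) \<in> instances n"
    using len sub by (auto simp: instances_def R_def)
  have "2 * alg_value (As a) R h \<le> n" if "a < k" for a
  proof -
    let ?M = "matched (As a) R h"
    have "?M \<subseteq> R" using matched_subset_Union sub by blast
    have "card ?M \<le> card (snd ` X - ?M)"
      using charge that by blast
    also have "\<dots> \<le> card (R - ?M)"
      using XR by (intro card_mono) (auto simp: R_def)
    also have "\<dots> = n - card ?M"
      using \<open>?M \<subseteq> R\<close> by (simp add: card_Diff_subset finite_matched R_def)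
    finally show ?thesis by (simp add: alg_value_eq_card_matched)
  qed
  then have "real (max_of_value As k R h) \<le> real n / 2"
    using max_of_value_le[of k As R h "n div 2"] by fastforce
  then have "real (max_of_value As k R h) / real (opt_value h)
               \<le> (real n / 2) / (real n - real (k * 2 ^ k))"
    using cardX opt gap by (intro frac_le) auto
  moreover have "ratio_n As k n \<le> ereal (real (max_of_value As k R h) / real (opt_value h))"
    unfolding ratio_n_def by (rule INF_lower2[OF inst]) simp
  ultimately show ?thesis
    by (meson ereal_less_eq(3) order_trans)
qed

lemma nat_floor_times_pow2_le_powr: "real (nat \<lfloor>t\<rfloor> * 2 ^ nat \<lfloor>t\<rfloor>) \<le> 4 powr t"
proof (cases "t < 0")
  case False
  define k where "k = nat \<lfloor>t\<rfloor>"
  have "k * 2 ^ k \<le> 2 ^ k * 2 ^ k"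
    using less_exp[of k] by simp
  also have "\<dots> = 4 ^ k"
    by (simp flip: power_mult_distrib)
  finally have "real (k * 2 ^ k) \<le> real (4 ^ k)"
    by (simp only: of_nat_le_iff)
  also have "\<dots> = 4 powr real k"
    by (simp add: powr_realpow)
  also have "\<dots> \<le> 4 powr t"
    using False by (intro powr_mono) (auto simp: k_def)
  finally show ?thesis by (simp add: k_def)
qed simp

theorem corollary1:
  fixes A :: "nat \<Rightarrow> nat \<Rightarrow> online_alg"
  shows "liminf (\<lambda>n. ratio_n (A n) (nat \<lfloor>t_fun n\<rfloor>) n) \<le> ereal (1/2)"
proof -
  define g where "g n = (real n / 2) / (real n - 4 powr t_fun n)" for n :: nat
  have "eventually (\<lambda>n. 4 powr t_fun n < real n) sequentially"
    unfolding t_fun_def by real_asymp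
  then have "eventually (\<lambda>n. ratio_n (A n) (nat \<lfloor>t_fun n\<rfloor>) n \<le> ereal (g n)) sequentially"
  proof eventually_elim
    case (elim n)
    define k where "k = nat \<lfloor>t_fun n\<rfloor>"
    have kb: "real (k * 2 ^ k) \<le> 4 powr t_fun n"
      unfolding k_def by (rule nat_floor_times_pow2_le_powr)
    then have "ratio_n (A n) k n \<le> ereal ((real n / 2) / (real n - real (k * 2 ^ k)))"
      using elim by (intro ratio_n_le) linarith
    also have "\<dots> \<le> ereal (g n)"
      unfolding g_def using kb elim by (auto intro!: divide_left_mono)
    finally show ?case by (simp add: k_def)
  qed
  then have "liminf (\<lambda>n. ratio_n (A n) (nat \<lfloor>t_fun n\<rfloor>) n) \<le> liminf (\<lambda>n. ereal (g n))"
    by (rule Liminf_mono)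
  also have "\<dots> = ereal (1/2)"
  proof (rule lim_imp_Liminf)
    have "g \<longlonglongrightarrow> 1/2"
      unfolding g_def t_fun_def by real_asymp
    then show "(\<lambda>n. ereal (g n)) \<longlonglongrightarrow> ereal (1/2)"
      by (simp add: lim_ereal)
  qed simp
  finally show ?thesis .
qed

end
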